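(* Let $d\ge2$ and let $\mathbf{p}^\star$ be a maximizer of the problem $$\max\Big\{\frac{\prod_{i=1}^dp_i}{D_1(\mathbf{p})^d}\;:\;\mathbf{p}\in(0,\infty)^d,\ p_1=1,\ D_1(\mathbf{p})^2\ge D_j(\mathbf{p})^2\text{ for all }j\in\{2,\dots,d\}\Big\}.$$ Then $\mathbf{p}^\star$ is a solution of the Karush–Kuhn–Tucker system below with multipliers $(\mu_2,\dots,\mu_d)\neq\mathbf{0}$, i.e. there exists $k\in\{2,\dots,d\}$ with $\mu_k>0$.
   Context: For $k\in\{1,\dots,d\}$ let $w_{k,i}=0$ for $i<k$, $w_{k,k}=k$, $w_{k,i}=i-1$ for $k<i\le d$, and $D_k(\mathbf{p})=\sqrt{\sum_{i=1}^dw_{k,i}^2p_i^2}$. Let $F_1(p_2,\dots,p_d)=\prod_{i=2}^dp_i/D_1(1,p_2,\dots,p_d)^d$, and regard $D_k$ as functions of $(p_2,\dots,p_d)$ with $p_1=1$. The Karush–Kuhn–Tucker system is: for all $j\in\{2,\dots,d\}$, $$\frac{\partial F_1}{\partial p_j}(\mathbf{p})=\sum_{i=2}^d\mu_i\frac{\partial}{\partial p_j}\big(D_i(\mathbf{p})^2-D_1(\mathbf{p})^2\big),\qquad \mu_j\big(D_j(\mathbf{p})^2-D_1(\mathbf{p})^2\big)=0,\qquad \mu_j\ge0,\qquad D_j(\mathbf{p})\le D_1(\mathbf{p}).$$ *)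

theory Defs
  imports "HOL-Analysis.Analysis"
begin

definition wt :: "nat \<Rightarrow> nat \<Rightarrow> real" where
  "wt k i = (if i < k then 0 else if i = k then real k else real i - 1)"

text \<open>D_k(p) = sqrt (sum_{i=1}^d w_{k,i}^2 p_i^2); vectors p are functions nat => real,
  only the coordinates 1..d matter.\<close>
definition Dk :: "nat \<Rightarrow> nat \<Rightarrow> (nat \<Rightarrow> real) \<Rightarrow> real" where
  "Dk d k p = sqrt (\<Sum>i=1..d. (wt k i)^2 * (p i)^2)"

definition F1 :: "nat \<Rightarrow> (nat \<Rightarrow> real) \<Rightarrow> real" where
  "F1 d p = (\<Prod>i=2..d. p i) / (Dk d 1 (p(1 := 1))) ^ d"

definition pderiv_at :: "((nat \<Rightarrow> real) \<Rightarrow> real) \<Rightarrow> nat \<Rightarrow> (nat \<Rightarrow> real) \<Rightarrow> real" where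
  "pderiv_at f j p = deriv (\<lambda>t. f (p(j := t))) (p j)"

definition feasible :: "nat \<Rightarrow> (nat \<Rightarrow> real) \<Rightarrow> bool" where
  "feasible d p \<longleftrightarrow> (\<forall>i\<in>{1..d}. p i > 0) \<and> p 1 = 1 \<and>
     (\<forall>j\<in>{2..d}. (Dk d 1 p)^2 \<ge> (Dk d j p)^2)"

end

theory Submission
  imports Defs
begin

(* The gradients of the constraints D_i^2 - D_1^2 (2 <= i <= d) with respect to p_2, ..., p_d
   form a lower triangular matrix with nonzero diagonal, since w_{i,j} = w_{1,j} for j > i. So any
   prescribed directional derivatives of the constraints are realised by some direction, and
   solving the transposed system expresses grad F_1 through the constraint gradients. Maximality
   means that F_1 cannot increase along a direction strictly decreasing every active constraint;
   testing this on the directions just mentioned gives mu >= 0 and complementary slackness.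
   Some mu_k is positive because grad F_1 does not vanish on the feasible set: at a critical point
   every w_{1,j}^2 p_j^2 equals D_1^2 / d, which forces D_1^2 = d, p_2 = 1 and hence
   D_2^2 - D_1^2 = 2 > 0. *)

lemma lower_triangular_system_solvable:
  fixes M :: "nat \<Rightarrow> nat \<Rightarrow> real"
  assumes lower: "\<And>r c. lo \<le> r \<Longrightarrow> r < c \<Longrightarrow> c \<le> hi \<Longrightarrow> M r c = 0"
    and diag: "\<And>r. lo \<le> r \<Longrightarrow> r \<le> hi \<Longrightarrow> M r r \<noteq> 0"
  shows "\<exists>x. \<forall>r\<in>{lo..hi}. (\<Sum>c=lo..hi. M r c * x c) = b r"
  using assms
proof (induction hi)
  case 0
  then show ?case
    by (cases "lo = 0") (auto simp: field_simps intro: exI[of _ "\<lambda>_. b 0 / M 0 0"])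
next
  case (Suc n)
  show ?case
  proof (cases "lo \<le> Suc n")
    case False
    then show ?thesis by simp
  next
    case True
    from Suc.IH Suc.prems obtain x where x: "\<forall>r\<in>{lo..n}. (\<Sum>c=lo..n. M r c * x c) = b r"
      by force
    define x' where "x' = x(Suc n := (b (Suc n) - (\<Sum>c=lo..n. M (Suc n) c * x c)) / M (Suc n) (Suc n))"
    have split: "{lo..Suc n} = insert (Suc n) {lo..n}" using True by auto
    have old: "(\<Sum>c=lo..n. M r c * x' c) = (\<Sum>c=lo..n. M r c * x c)" for r
      by (rule sum.cong) (auto simp: x'_def)
    have "(\<Sum>c=lo..Suc n. M r c * x' c) = b r" if r: "r \<in> {lo..Suc n}" for r
    proof (cases "r = Suc n")
      case True
      then show ?thesis
        using Suc.prems(2)[of "Suc n"] \<open>lo \<le> Suc n\<close> r by (simp add: split old x'_def field_simps)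
    next
      case False
      then show ?thesis using r x Suc.prems(1)[of r "Suc n"] by (simp add: split old)
    qed
    then show ?thesis by blast
  qed
qed

lemma upper_triangular_system_solvable:
  fixes M :: "nat \<Rightarrow> nat \<Rightarrow> real"
  assumes upper: "\<And>r c. lo \<le> c \<Longrightarrow> c < r \<Longrightarrow> r \<le> hi \<Longrightarrow> M r c = 0"
    and diag: "\<And>r. lo \<le> r \<Longrightarrow> r \<le> hi \<Longrightarrow> M r r \<noteq> 0"
  shows "\<exists>x. \<forall>r\<in>{lo..hi}. (\<Sum>c=lo..hi. M r c * x c) = b r"
proof -
  define flip where "flip i = hi + lo - i" for i
  have "\<exists>y. \<forall>r\<in>{lo..hi}. (\<Sum>c=lo..hi. M (flip r) (flip c) * y c) = b (flip r)"
  proof (rule lower_triangular_system_solvable)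
    show "M (flip r) (flip c) = 0" if "lo \<le> r" "r < c" "c \<le> hi" for r c
      using that by (auto simp: flip_def intro!: upper)
    show "M (flip r) (flip r) \<noteq> 0" if "lo \<le> r" "r \<le> hi" for r
      using that diag[of "flip r"] by (simp add: flip_def)
  qed
  then obtain y where y: "\<forall>r\<in>{lo..hi}. (\<Sum>c=lo..hi. M (flip r) (flip c) * y c) = b (flip r)" ..
  have flip_flip: "flip (flip r) = r" if "r \<in> {lo..hi}" for r
    using that by (simp add: flip_def)
  have "(\<Sum>c=lo..hi. M r c * y (flip c)) = b r" if r: "r \<in> {lo..hi}" for r
  proof -
    have "(\<Sum>c=lo..hi. M r c * y (flip c)) = (\<Sum>c=lo..hi. M (flip (flip r)) (flip c) * y c)"
      using r by (subst sum.atLeastAtMost_rev) (auto simp: flip_def intro!: sum.cong)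
    also have "\<dots> = b (flip (flip r))"
      by (rule y[rule_format]) (use r in \<open>auto simp: flip_def\<close>)
    finally show ?thesis
      using flip_flip[OF r] by simp
  qed
  then show ?thesis
    by (intro exI[of _ "\<lambda>c. y (flip c)"]) blast
qed

(* Test the functional on the vector that is c at j and a small negative constant elsewhere. *)
lemma nonpos_pairing_imp_sign_conditions:
  fixes \<mu> :: "nat \<Rightarrow> real"
  assumes pairing: "\<And>w. \<forall>i\<in>I \<inter> A. w i < 0 \<Longrightarrow> (\<Sum>i\<in>I. \<mu> i * w i) \<le> 0"
    and "finite I" and j: "j \<in> I"
  shows "0 \<le> \<mu> j" and "j \<notin> A \<Longrightarrow> \<mu> j = 0"
proof -
  have contra: False if c: "c * \<mu> j > 0" and c_neg: "j \<in> A \<Longrightarrow> c < 0" for c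
  proof -
    define R where "R = (\<Sum>i\<in>I - {j}. \<mu> i)"
    define \<epsilon> where "\<epsilon> = c * \<mu> j / (2 * (\<bar>R\<bar> + 1))"
    have \<epsilon>_pos: "\<epsilon> > 0"
      using c by (simp add: \<epsilon>_def add_nonneg_pos)
    define w where "w i = (if i = j then c else - \<epsilon>)" for i
    have "(\<Sum>i\<in>I. \<mu> i * w i) = c * \<mu> j - \<epsilon> * R"
      using j \<open>finite I\<close>
      by (simp add: sum.remove w_def R_def sum_distrib_left sum_negf mult.commute)
    moreover have "(\<Sum>i\<in>I. \<mu> i * w i) \<le> 0"
      by (rule pairing) (use \<epsilon>_pos c_neg in \<open>auto simp: w_def\<close>)
    moreover have "\<epsilon> * R < \<epsilon> * (2 * (\<bar>R\<bar> + 1))"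
      using \<epsilon>_pos by (intro mult_strict_left_mono) auto
    moreover have "\<epsilon> * (2 * (\<bar>R\<bar> + 1)) = c * \<mu> j"
      by (simp add: \<epsilon>_def add_nonneg_pos)
    ultimately show False by linarith
  qed
  show "0 \<le> \<mu> j"
    using contra[of "-1"] by force
  show "\<mu> j = 0" if "j \<notin> A"
    using contra[of "\<mu> j"] that by (force simp: zero_less_mult_iff linorder_neq_iff)
qed

lemma lower_triangular_constraints_multipliers:
  fixes M :: "nat \<Rightarrow> nat \<Rightarrow> real" and a :: "nat \<Rightarrow> real"
  assumes lower: "\<And>i j. lo \<le> i \<Longrightarrow> i < j \<Longrightarrow> j \<le> hi \<Longrightarrow> M i j = 0"
    and diag: "\<And>i. lo \<le> i \<Longrightarrow> i \<le> hi \<Longrightarrow> M i i \<noteq> 0"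
    and first_order:
      "\<And>v. \<forall>i\<in>{lo..hi} \<inter> A. (\<Sum>j=lo..hi. M i j * v j) < 0 \<Longrightarrow> (\<Sum>j=lo..hi. a j * v j) \<le> 0"
  shows "\<exists>\<mu>. (\<forall>j\<in>{lo..hi}. a j = (\<Sum>i=lo..hi. \<mu> i * M i j)) \<and>
              (\<forall>i\<in>{lo..hi}. 0 \<le> \<mu> i \<and> (i \<notin> A \<longrightarrow> \<mu> i = 0))"
proof -
  obtain \<mu> where \<mu>: "\<forall>j\<in>{lo..hi}. a j = (\<Sum>i=lo..hi. \<mu> i * M i j)"
    using upper_triangular_system_solvable[of lo hi "\<lambda>j i. M i j" a] lower diag
    by (metis (no_types, lifting) mult.commute sum.cong)
  have "(\<Sum>i=lo..hi. \<mu> i * w i) \<le> 0" if w: "\<forall>i\<in>{lo..hi} \<inter> A. w i < 0" for w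
  proof -
    obtain v where v: "\<forall>i\<in>{lo..hi}. (\<Sum>j=lo..hi. M i j * v j) = w i"
      using lower_triangular_system_solvable[of lo hi M w] lower diag by blast
    have "(\<Sum>i=lo..hi. \<mu> i * w i) = (\<Sum>i=lo..hi. \<Sum>j=lo..hi. \<mu> i * M i j * v j)"
      using v by (auto simp: sum_distrib_left[symmetric] mult.assoc intro!: sum.cong)
    also have "\<dots> = (\<Sum>j=lo..hi. a j * v j)"
      using \<mu> by (subst sum.swap) (auto simp: sum_distrib_right[symmetric] intro!: sum.cong)
    also have "\<dots> \<le> 0"
      using first_order v w by simp
    finally show ?thesis .
  qed
  then have "\<forall>i\<in>{lo..hi}. 0 \<le> \<mu> i \<and> (i \<notin> A \<longrightarrow> \<mu> i = 0)"
    using nonpos_pairing_imp_sign_conditions[where I = "{lo..hi}" and A = A and \<mu> = \<mu>] by blast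
  with \<mu> show ?thesis by blast
qed

lemma pderiv_at_eq_line_derivative:
  assumes "((\<lambda>s. f (\<lambda>i. p i + s * (if i = j then 1 else 0))) has_real_derivative D) (at 0)"
  shows "pderiv_at f j p = D"
proof -
  have "(\<lambda>i. p i + s * (if i = j then 1 else 0)) = p(j := s + p j)" for s
    by auto
  with assms have "((\<lambda>s. f (p(j := s + p j))) has_real_derivative D) (at 0)"
    by simp
  then have "((\<lambda>t. f (p(j := t))) has_real_derivative D) (at (0 + p j))"
    by (subst DERIV_shift)
  then show ?thesis
    unfolding pderiv_at_def by (intro DERIV_imp_deriv) simp
qed

lemma eventually_at_right_of_increments:
  fixes x :: real
  assumes "\<delta> > 0" and "\<forall>h>0. h < \<delta> \<longrightarrow> P (x + h)"
  shows "eventually P (at_right x)"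
proof -
  have "eventually (\<lambda>t. t \<in> {x<..<x + \<delta>}) (at_right x)"
    using \<open>\<delta> > 0\<close> by (intro eventually_at_right_real) simp
  then show ?thesis
  proof eventually_elim
    case (elim t)
    then show ?case
      using assms(2)[rule_format, of "t - x"] by simp
  qed
qed

lemma right_local_max_imp_derivative_nonpos:
  fixes \<phi> :: "real \<Rightarrow> real"
  assumes der: "(\<phi> has_real_derivative D) (at x)"
    and max: "eventually (\<lambda>t. \<phi> t \<le> \<phi> x) (at_right x)"
  shows "D \<le> 0"
proof (rule ccontr)
  assume "\<not> D \<le> 0"
  then obtain \<delta> where "\<delta> > 0" "\<forall>h>0. h < \<delta> \<longrightarrow> \<phi> x < \<phi> (x + h)"
    using DERIV_pos_inc_right[OF der] by auto
  then have "eventually (\<lambda>t. \<phi> x < \<phi> t) (at_right x)"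
    by (rule eventually_at_right_of_increments)
  with max have "eventually (\<lambda>_. False) (at_right x)"
    by eventually_elim simp
  then show False
    by (simp add: trivial_limit_at_right_real)
qed

lemma derivative_imp_eventually_nonpos_at_right:
  fixes \<phi> :: "real \<Rightarrow> real"
  assumes der: "(\<phi> has_real_derivative D) (at x)"
    and nonpos: "\<phi> x \<le> 0" and active: "\<phi> x = 0 \<Longrightarrow> D < 0"
  shows "eventually (\<lambda>t. \<phi> t \<le> 0) (at_right x)"
proof (cases "\<phi> x = 0")
  case True
  then obtain \<delta> where "\<delta> > 0" "\<forall>h>0. h < \<delta> \<longrightarrow> \<phi> (x + h) < 0"
    using DERIV_neg_dec_right[OF der active] by auto
  then have "eventually (\<lambda>t. \<phi> t < 0) (at_right x)"
    by (rule eventually_at_right_of_increments)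
  then show ?thesis
    by eventually_elim simp
next
  case False
  with nonpos have "\<phi> x < 0" by simp
  moreover have "(\<phi> \<longlongrightarrow> \<phi> x) (at_right x)"
    using DERIV_isCont[OF der] by (simp add: filterlim_at_split isCont_def)
  ultimately have "eventually (\<lambda>t. \<phi> t < 0) (at_right x)"
    by (auto intro: order_tendstoD)
  then show ?thesis
    by eventually_elim simp
qed

definition D1_sq :: "nat \<Rightarrow> (nat \<Rightarrow> real) \<Rightarrow> real" where
  "D1_sq d p = 1 + (\<Sum>i=2..d. (wt 1 i)^2 * (p i)^2)"

lemma D1_sq_ge_1: "D1_sq d p \<ge> 1"
  unfolding D1_sq_def by (simp add: sum_nonneg)

lemma Dk_sq: "(Dk d k p)^2 = (\<Sum>i=1..d. (wt k i)^2 * (p i)^2)"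
  unfolding Dk_def by (simp add: sum_nonneg)

lemma atLeastAtMost_1_eq_insert: "(d::nat) \<ge> 1 \<Longrightarrow> {1..d} = insert 1 {2..d}"
  by auto

lemma wt_self [simp]: "wt k k = real k"
  by (simp add: wt_def)

lemma Dk_1_eq_sqrt_D1_sq:
  assumes "d \<ge> 1" and "p 1 = 1"
  shows "Dk d 1 p = sqrt (D1_sq d p)"
  unfolding Dk_def D1_sq_def atLeastAtMost_1_eq_insert[OF assms(1)] using assms(2) by simp

lemma F1_eq: "d \<ge> 1 \<Longrightarrow> F1 d p = (\<Prod>i=2..d. p i) / sqrt (D1_sq d p) ^ d"
  unfolding F1_def by (subst Dk_1_eq_sqrt_D1_sq) (auto simp: D1_sq_def)

lemma F1_eq_objective:
  assumes "d \<ge> 1" and "p 1 = 1"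
  shows "F1 d p = (\<Prod>i=1..d. p i) / (Dk d 1 p) ^ d"
proof -
  have "p(1 := 1) = p"
    using assms(2) by auto
  then show ?thesis
    unfolding F1_def atLeastAtMost_1_eq_insert[OF assms(1)] using assms(2) by simp
qed

definition F1_grad :: "nat \<Rightarrow> (nat \<Rightarrow> real) \<Rightarrow> nat \<Rightarrow> real" where
  "F1_grad d p k = (\<Prod>i\<in>{2..d}-{k}. p i) / sqrt (D1_sq d p) ^ d
     - (\<Prod>i=2..d. p i) * real d * (wt 1 k)^2 * p k / sqrt (D1_sq d p) ^ (d+2)"

lemma quotient_rule_power_eq:
  fixes D :: real
  assumes "D > 0" "d \<ge> 1"
  shows "(N' * D^d - N * (real d * (inverse D / 2 * S' * D^(d - 1)))) / (D^d * D^d)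
     = N' / D^d - N * real d * (S'/2) / D^(d+2)"
proof -
  obtain m where m: "d = Suc m" using assms(2) by (cases d) auto
  show ?thesis using assms(1) unfolding m by (simp add: field_simps power2_eq_square)
qed

lemma F1_has_derivative_along_line:
  assumes d: "d \<ge> 1"
  shows "((\<lambda>t. F1 d (\<lambda>i. q i + t * v i)) has_real_derivative
          (\<Sum>k=2..d. F1_grad d (\<lambda>i. q i + s * v i) k * v k)) (at s)"
proof -
  define r where "r = (\<lambda>i. q i + s * v i)"
  define D where "D = sqrt (D1_sq d r)"
  define S' where "S' = (\<Sum>k=2..d. 2 * (wt 1 k)^2 * r k * v k)"
  have D_pos: "D > 0"
    using D1_sq_ge_1[of d r] by (simp add: D_def)
  have num: "((\<lambda>t. \<Prod>i=2..d. q i + t * v i) has_real_derivative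
      (\<Sum>k=2..d. v k * (\<Prod>i\<in>{2..d}-{k}. r i))) (at s)"
    unfolding r_def by (rule has_field_derivative_prod) (auto intro!: derivative_eq_intros)
  have sq: "((\<lambda>t. D1_sq d (\<lambda>i. q i + t * v i)) has_real_derivative S') (at s)"
    unfolding D1_sq_def r_def S'_def
    by (auto intro!: derivative_eq_intros simp: power2_eq_square algebra_simps)
  have "((\<lambda>t. sqrt (D1_sq d (\<lambda>i. q i + t * v i))) has_real_derivative inverse D / 2 * S') (at s)"
    using DERIV_chain2[OF DERIV_real_sqrt sq] D1_sq_ge_1[of d r] by (simp add: D_def r_def)
  from DERIV_divide[OF num DERIV_power[OF this, of d]] D_pos
  have "((\<lambda>t. F1 d (\<lambda>i. q i + t * v i)) has_real_derivative
     ((\<Sum>k=2..d. v k * (\<Prod>i\<in>{2..d}-{k}. r i)) * D ^ d - (\<Prod>i=2..d. r i) *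
       (real d * (inverse D / 2 * S' * D ^ (d - 1)))) / (D ^ d * D ^ d)) (at s)"
    using F1_eq[OF d] by (simp add: D_def r_def)
  moreover have "((\<Sum>k=2..d. v k * (\<Prod>i\<in>{2..d}-{k}. r i)) * D ^ d - (\<Prod>i=2..d. r i) *
       (real d * (inverse D / 2 * S' * D ^ (d - 1)))) / (D ^ d * D ^ d)
    = (\<Sum>k=2..d. v k * (\<Prod>i\<in>{2..d}-{k}. r i)) / D ^ d
      - (\<Prod>i=2..d. r i) * real d * (S' / 2) / D ^ (d + 2)"
    by (rule quotient_rule_power_eq[OF D_pos d])
  moreover have "\<dots> = (\<Sum>k=2..d. F1_grad d r k * v k)"
    unfolding F1_grad_def D_def[symmetric] S'_def
      sum_divide_distrib sum_distrib_left sum_subtractf[symmetric]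
    by (intro sum.cong) (auto simp: field_simps)
  ultimately show ?thesis
    by (simp add: r_def)
qed

lemma sum_mult_indicator:
  "j \<in> A \<Longrightarrow> finite A \<Longrightarrow> (\<Sum>k\<in>A. f k * (if k = j then 1 else 0)) = (f j :: real)"
  by (simp add: if_distrib cong: if_cong)

lemma pderiv_F1:
  assumes "d \<ge> 1" and "j \<in> {2..d}"
  shows "pderiv_at (F1 d) j p = F1_grad d p j"
  using F1_has_derivative_along_line[OF assms(1), of p "\<lambda>i. if i = j then 1 else 0" 0] assms(2)
  by (intro pderiv_at_eq_line_derivative) (simp add: sum_mult_indicator)

definition constraint_grad :: "nat \<Rightarrow> nat \<Rightarrow> (nat \<Rightarrow> real) \<Rightarrow> real" where
  "constraint_grad i j p = 2 * ((wt i j)^2 - (wt 1 j)^2) * p j"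

lemma constraint_has_derivative_along_line:
  "((\<lambda>t. (Dk d i (\<lambda>l. p l + t * v l))^2 - (Dk d 1 (\<lambda>l. p l + t * v l))^2) has_real_derivative
     (\<Sum>l=1..d. constraint_grad i l p * v l)) (at 0)"
  unfolding Dk_sq constraint_grad_def
  by (auto intro!: derivative_eq_intros sum.cong simp: sum_subtractf[symmetric] algebra_simps)

lemma pderiv_constraint:
  assumes "j \<in> {1..d}"
  shows "pderiv_at (\<lambda>p. (Dk d i p)^2 - (Dk d 1 p)^2) j p = constraint_grad i j p"
  using constraint_has_derivative_along_line[of d i p "\<lambda>l. if l = j then 1 else 0"] assms
  by (intro pderiv_at_eq_line_derivative) (simp add: sum_mult_indicator)

lemma constraint_grad_above_diag: "2 \<le> i \<Longrightarrow> i < j \<Longrightarrow> constraint_grad i j p = 0"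
  by (simp add: constraint_grad_def wt_def)

lemma constraint_grad_diag: "2 \<le> i \<Longrightarrow> constraint_grad i i p = 2 * (2 * real i - 1) * p i"
  by (simp add: constraint_grad_def wt_def power2_eq_square algebra_simps)

lemma eventually_feasible_along_direction:
  assumes d: "d \<ge> 1" and feas: "feasible d p" and v1: "v 1 = 0"
    and descent: "\<forall>i\<in>{2..d} \<inter> {i. (Dk d i p)^2 = (Dk d 1 p)^2}.
                    (\<Sum>j=2..d. constraint_grad i j p * v j) < 0"
  shows "eventually (\<lambda>t. feasible d (\<lambda>i. p i + t * v i)) (at_right 0)"
proof -
  have pos: "eventually (\<lambda>t. \<forall>i\<in>{1..d}. p i + t * v i > 0) (at_right (0::real))"
  proof (intro eventually_ball_finite ballI)
    show "eventually (\<lambda>t. p i + t * v i > 0) (at_right 0)" if "i \<in> {1..d}" for i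
    proof (rule order_tendstoD)
      show "((\<lambda>t. p i + t * v i) \<longlongrightarrow> p i) (at_right 0)"
        by (auto intro!: tendsto_eq_intros)
      show "0 < p i"
        using feas that by (simp add: feasible_def)
    qed
  qed simp
  have cons: "eventually (\<lambda>t. \<forall>j\<in>{2..d}.
      (Dk d j (\<lambda>i. p i + t * v i))^2 - (Dk d 1 (\<lambda>i. p i + t * v i))^2 \<le> 0) (at_right (0::real))"
  proof (intro eventually_ball_finite ballI)
    fix j assume j: "j \<in> {2..d}"
    have "(\<Sum>l=1..d. constraint_grad j l p * v l) = (\<Sum>l=2..d. constraint_grad j l p * v l)"
      unfolding atLeastAtMost_1_eq_insert[OF d] using v1 by simp
    then show "eventually (\<lambda>t. (Dk d j (\<lambda>i. p i + t * v i))^2 - (Dk d 1 (\<lambda>i. p i + t * v i))^2 \<le> 0)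
        (at_right 0)"
      using constraint_has_derivative_along_line[of d j p v] feas descent j
      by (intro derivative_imp_eventually_nonpos_at_right) (auto simp: feasible_def)
  qed simp
  from pos cons show ?thesis
    by eventually_elim (use feas v1 in \<open>auto simp: feasible_def\<close>)
qed

lemma first_order_condition_F1:
  assumes d: "d \<ge> 1" and feas: "feasible d ps"
    and max: "\<forall>q. feasible d q \<longrightarrow>
           (\<Prod>i=1..d. q i) / (Dk d 1 q) ^ d \<le> (\<Prod>i=1..d. ps i) / (Dk d 1 ps) ^ d"
    and descent: "\<forall>i\<in>{2..d} \<inter> {i. (Dk d i ps)^2 = (Dk d 1 ps)^2}.
                    (\<Sum>j=2..d. constraint_grad i j ps * v j) < 0"
  shows "(\<Sum>j=2..d. F1_grad d ps j * v j) \<le> 0"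
proof -
  define u where "u = v(1 := 0)"
  have sum_u: "(\<Sum>j=2..d. f j * u j) = (\<Sum>j=2..d. f j * v j)" for f :: "nat \<Rightarrow> real"
    by (rule sum.cong) (auto simp: u_def)
  define \<phi> where "\<phi> = (\<lambda>t. F1 d (\<lambda>i. ps i + t * u i))"
  have "(\<phi> has_real_derivative (\<Sum>j=2..d. F1_grad d ps j * v j)) (at 0)"
    using F1_has_derivative_along_line[OF d, of ps u 0] by (simp add: \<phi>_def sum_u)
  moreover have "eventually (\<lambda>t. feasible d (\<lambda>i. ps i + t * u i)) (at_right 0)"
    by (rule eventually_feasible_along_direction[OF d feas]) (use descent in \<open>simp_all add: u_def sum_u\<close>)
  then have "eventually (\<lambda>t. \<phi> t \<le> \<phi> 0) (at_right 0)"
  proof eventually_elim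
    case (elim t)
    then show ?case
      using max feas F1_eq_objective[OF d] by (simp add: \<phi>_def feasible_def)
  qed
  ultimately show ?thesis
    by (rule right_local_max_imp_derivative_nonpos)
qed

lemma F1_grad_eq_0_iff:
  assumes pos: "\<forall>i\<in>{2..d}. p i > 0" and j: "j \<in> {2..d}"
  shows "F1_grad d p j = 0 \<longleftrightarrow> D1_sq d p = real d * (wt 1 j)^2 * (p j)^2"
proof -
  define P where "P = (\<Prod>i\<in>{2..d}-{j}. p i)"
  define S where "S = D1_sq d p"
  have P_pos: "P > 0"
    unfolding P_def using pos by (intro prod_pos) auto
  have S_pos: "S > 0"
    using D1_sq_ge_1[of d p] by (simp add: S_def)
  have prod_eq: "(\<Prod>i=2..d. p i) = p j * P"
    unfolding P_def using j by (simp add: prod.remove)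
  have "sqrt S ^ (d + 2) = sqrt S ^ d * S"
    using S_pos by (simp add: power_add)
  then have "F1_grad d p j = P * (S - real d * (wt 1 j)^2 * (p j)^2) / (sqrt S ^ d * S)"
    using S_pos unfolding F1_grad_def S_def[symmetric] P_def[symmetric] prod_eq
    by (simp add: field_simps power2_eq_square)
  then show ?thesis
    using P_pos S_pos by (simp add: S_def)
qed

lemma F1_grad_not_all_zero:
  assumes d: "d \<ge> 2" and feas: "feasible d p"
  shows "\<exists>j\<in>{2..d}. F1_grad d p j \<noteq> 0"
proof (rule ccontr)
  assume "\<not> ?thesis"
  then have crit: "D1_sq d p = real d * (wt 1 j)^2 * (p j)^2" if "j \<in> {2..d}" for j
    using F1_grad_eq_0_iff[of d p j] feas that by (auto simp: feasible_def)
  define S where "S = D1_sq d p"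
  have "S = 1 + (\<Sum>i=2..d. S / real d)"
    using crit d unfolding S_def D1_sq_def
    by (intro arg_cong2[where f = "(+)"] sum.cong) (auto simp: field_simps)
  also have "\<dots> = 1 + (real d - 1) * (S / real d)"
    using d by (simp add: of_nat_diff)
  finally have "S = real d"
    using d by (simp add: field_simps)
  then have p2: "(p 2)^2 = 1"
    using crit[of 2] d by (simp add: S_def wt_def)
  have "(Dk d 2 p)^2 - (Dk d 1 p)^2 = (\<Sum>l=1..d. ((wt 2 l)^2 - (wt 1 l)^2) * (p l)^2)"
    unfolding Dk_sq sum_subtractf[symmetric] by (simp add: algebra_simps)
  moreover have "\<dots> = 3 * (p 2)^2 - (p 1)^2"
  proof -
    have "{1..d} = {1, 2} \<union> {3..d}"
      using d by auto
    moreover have "(\<Sum>l=3..d. ((wt 2 l)^2 - (wt 1 l)^2) * (p l)^2) = 0"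
      by (intro sum.neutral) (auto simp: wt_def)
    ultimately show ?thesis
      by (simp add: sum.union_disjoint wt_def)
  qed
  moreover have "(Dk d 2 p)^2 \<le> (Dk d 1 p)^2"
    using feas d unfolding feasible_def by auto
  ultimately show False
    using feas p2 by (simp add: feasible_def)
qed

lemma F1_KKT_multipliers:
  assumes d: "d \<ge> 1" and feas: "feasible d ps"
    and max: "\<forall>q. feasible d q \<longrightarrow>
           (\<Prod>i=1..d. q i) / (Dk d 1 q) ^ d \<le> (\<Prod>i=1..d. ps i) / (Dk d 1 ps) ^ d"
  shows "\<exists>\<mu>. (\<forall>j\<in>{2..d}. F1_grad d ps j = (\<Sum>i=2..d. \<mu> i * constraint_grad i j ps)) \<and>
              (\<forall>i\<in>{2..d}. 0 \<le> \<mu> i \<and> ((Dk d i ps)^2 \<noteq> (Dk d 1 ps)^2 \<longrightarrow> \<mu> i = 0))"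
proof -
  have pos: "ps i > 0" if "i \<in> {1..d}" for i
    using feas that by (simp add: feasible_def)
  have "\<exists>\<mu>. (\<forall>j\<in>{2..d}. F1_grad d ps j = (\<Sum>i=2..d. \<mu> i * constraint_grad i j ps)) \<and>
            (\<forall>i\<in>{2..d}. 0 \<le> \<mu> i \<and> (i \<notin> {i. (Dk d i ps)^2 = (Dk d 1 ps)^2} \<longrightarrow> \<mu> i = 0))"
  proof (rule lower_triangular_constraints_multipliers)
    show "constraint_grad i j ps = 0" if "2 \<le> i" "i < j" for i j
      using that by (rule constraint_grad_above_diag)
    show "constraint_grad i i ps \<noteq> 0" if "2 \<le> i" "i \<le> d" for i
      using that pos[of i] by (simp add: constraint_grad_diag)
  qed (rule first_order_condition_F1[OF d feas max])
  then show ?thesis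
    by simp
qed

theorem lemma5:
  fixes d :: nat and ps :: "nat \<Rightarrow> real"
  assumes "d \<ge> 2"
    and "feasible d ps"
    and "\<forall>q. feasible d q \<longrightarrow>
           (\<Prod>i=1..d. q i) / (Dk d 1 q) ^ d \<le> (\<Prod>i=1..d. ps i) / (Dk d 1 ps) ^ d"
  shows "\<exists>\<mu> :: nat \<Rightarrow> real.
           (\<forall>j\<in>{2..d}.
              pderiv_at (F1 d) j ps =
                (\<Sum>i=2..d. \<mu> i * pderiv_at (\<lambda>p. (Dk d i p)^2 - (Dk d 1 p)^2) j ps)) \<and>
           (\<forall>j\<in>{2..d}. \<mu> j * ((Dk d j ps)^2 - (Dk d 1 ps)^2) = 0 \<and> \<mu> j \<ge> 0 \<and>
              Dk d j ps \<le> Dk d 1 ps) \<and>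
           (\<exists>k\<in>{2..d}. \<mu> k > 0)"
proof -
  have d1: "d \<ge> 1" using assms(1) by simp
  obtain \<mu> where grad: "\<forall>j\<in>{2..d}. F1_grad d ps j = (\<Sum>i=2..d. \<mu> i * constraint_grad i j ps)"
    and sign: "\<forall>i\<in>{2..d}. 0 \<le> \<mu> i \<and> ((Dk d i ps)^2 \<noteq> (Dk d 1 ps)^2 \<longrightarrow> \<mu> i = 0)"
    using F1_KKT_multipliers[OF d1 assms(2,3)] by blast
  have "\<exists>k\<in>{2..d}. \<mu> k > 0"
  proof -
    obtain j where "j \<in> {2..d}" "F1_grad d ps j \<noteq> 0"
      using F1_grad_not_all_zero[OF assms(1,2)] by blast
    then obtain k where "k \<in> {2..d}" "\<mu> k \<noteq> 0"
      using grad by (metis (no_types, lifting) mult_eq_0_iff sum.neutral)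
    then show ?thesis
      using sign by force
  qed
  moreover have "pderiv_at (F1 d) j ps =
      (\<Sum>i=2..d. \<mu> i * pderiv_at (\<lambda>p. (Dk d i p)^2 - (Dk d 1 p)^2) j ps)" if "j \<in> {2..d}" for j
  proof -
    have j: "j \<in> {1..d}"
      using that by simp
    show ?thesis
      unfolding pderiv_F1[OF d1 that] pderiv_constraint[OF j] using grad that by simp
  qed
  moreover have "\<mu> j * ((Dk d j ps)^2 - (Dk d 1 ps)^2) = 0" if "j \<in> {2..d}" for j
    using that sign by auto
  moreover have "Dk d j ps \<le> Dk d 1 ps" if "j \<in> {2..d}" for j
  proof (rule power2_le_imp_le)
    show "(Dk d j ps)^2 \<le> (Dk d 1 ps)^2"
      using assms(2) that by (simp add: feasible_def)
  qed (simp add: Dk_def sum_nonneg)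
  ultimately show ?thesis
    using sign by blast
qed

end
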